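(* Let $M$ be a commutative and cocommutative Hopf algebra over $\mathbb{C}$ and $A$ a commutative $\mathbb{C}$-algebra. Each map $\mathrm{EQ}_r$ (for $r$ an $A$-valued bicharacter on $M$) is invertible, with inverse $\mathrm{EQ}_{r^{-1}}$. Moreover, if $r_1,r_2$ are $A$-valued bicharacters on $M$ with symmetrizations $s_1,s_2$ respectively, then \[ \mathrm{EQ}_{r_2}\circ\mathrm{EQ}_{r_1^{-1}}\colon (M_A,\bullet_{s_1})\to (M_A,\bullet_{s_2}) \] is a homomorphism from the multiplication $\bullet_{s_1}$ to the multiplication $\bullet_{s_2}$.
   Context: For a Hopf algebra $M$ with coproduct $\Delta$, counit $\eta$ and antipode $S$, Sweedler notation is used: $\Delta(a)=\sum a'\otimes a''$, $\Delta^2(a)=\sum a'\otimes a''\otimes a'''$. An $A$-valued bicharacter on $M$ is a linear map $r:M\otimes M\to A$ such that for all $a,b,c\in M$: $r(1\otimes a)=\eta(a)=r(a\otimes 1)$, $r(ab\otimes c)=\sum r(a\otimes c')r(b\otimes c'')$, $r(a\otimes bc)=\sum r(a'\otimes b)r(a''\otimes c)$. Convolution: $(r\circ t)(a\otimes b)=\sum r(a'\otimes b')t(a''\otimes b'')$; $r^t(a\otimes b)=r(b\otimes a)$; the inverse bicharacter is $r^{-1}(a\otimes b)=r(S(a)\otimes b)$. The symmetrization of $r$ is $s=r\circ r^t$. $M_A=M\otimes_{\mathbb{C}}A$. For a symmetric bicharacter $t$ (i.e. $t=t^t$), $\bullet_t$ is the $A$-bilinear product on $M_A$ extending $a\bullet_t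 b=\sum a'b'\,t(a''\otimes b'')$. The map $\mathrm{EQ}_r(m)=\sum r(m'\otimes m'')m'''$ is extended $A$-linearly to $M_A\to M_A$. *)

theory Defs
  imports Complex_Main
begin

text \<open>Elements of tensor products are represented by
  finite formal sums (lists of pairs / triples); two formal sums denote the same
  element of the algebraic tensor product iff all complex-valued multilinear
  forms agree on them (valid over a field).\<close>

definition bilin ::
  "(complex \<Rightarrow> 'a::ab_group_add \<Rightarrow> 'a) \<Rightarrow> (complex \<Rightarrow> 'b::ab_group_add \<Rightarrow> 'b)
    \<Rightarrow> (complex \<Rightarrow> 'c::ab_group_add \<Rightarrow> 'c) \<Rightarrow> ('a \<Rightarrow> 'b \<Rightarrow> 'c) \<Rightarrow> bool" where
  "bilin sa sb sc f \<longleftrightarrow>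
     (\<forall>x. Vector_Spaces.linear sb sc (f x)) \<and> (\<forall>y. Vector_Spaces.linear sa sc (\<lambda>x. f x y))"

definition trilin ::
  "(complex \<Rightarrow> 'a::ab_group_add \<Rightarrow> 'a) \<Rightarrow> (complex \<Rightarrow> 'c::ab_group_add \<Rightarrow> 'c)
    \<Rightarrow> ('a \<Rightarrow> 'a \<Rightarrow> 'a \<Rightarrow> 'c) \<Rightarrow> bool" where
  "trilin s sc f \<longleftrightarrow>
     (\<forall>x y. Vector_Spaces.linear s sc (f x y)) \<and>
     (\<forall>x z. Vector_Spaces.linear s sc (\<lambda>y. f x y z)) \<and>
     (\<forall>y z. Vector_Spaces.linear s sc (\<lambda>x. f x y z))"

definition sw :: "('a \<times> 'b) list \<Rightarrow> ('a \<Rightarrow> 'b \<Rightarrow> 'c::comm_monoid_add) \<Rightarrow> 'c" where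
  "sw xs f = sum_list (map (\<lambda>(x, y). f x y) xs)"

definition ten_eq ::
  "(complex \<Rightarrow> 'a::ab_group_add \<Rightarrow> 'a) \<Rightarrow> (complex \<Rightarrow> 'b::ab_group_add \<Rightarrow> 'b) \<Rightarrow> ('a \<times> 'b) list \<Rightarrow> ('a \<times> 'b) list \<Rightarrow> bool" where
  "ten_eq sa sb xs ys \<longleftrightarrow>
     (\<forall>g :: 'a \<Rightarrow> 'b \<Rightarrow> complex. bilin sa sb (*) g \<longrightarrow> sw xs g = sw ys g)"

locale comm_calg =
  fixes sm :: "complex \<Rightarrow> 'm::comm_ring_1 \<Rightarrow> 'm"
  assumes vs: "vector_space sm"
    and scale_mult: "\<And>c x y. sm c (x * y) = sm c x * y"

text \<open>A commutative Hopf algebra over the complex numbers; the coproduct of a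
  is given by a Sweedler representation cop a = [(a', a''), ...].\<close>
locale comm_hopf_algebra = comm_calg sm
  for sm :: "complex \<Rightarrow> 'm::comm_ring_1 \<Rightarrow> 'm" +
  fixes cop :: "'m \<Rightarrow> ('m \<times> 'm) list"
    and cou :: "'m \<Rightarrow> complex"
    and S :: "'m \<Rightarrow> 'm"
  assumes cop_linear:
      "\<And>g :: 'm \<Rightarrow> 'm \<Rightarrow> complex. bilin sm sm (*) g \<Longrightarrow>
         Vector_Spaces.linear sm (*) (\<lambda>a. sw (cop a) g)"
    and coassoc:
      "\<And>(h :: 'm \<Rightarrow> 'm \<Rightarrow> 'm \<Rightarrow> complex) a. trilin sm (*) h \<Longrightarrow>
         sw (cop a) (\<lambda>x y. sw (cop x) (\<lambda>u v. h u v y))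
       = sw (cop a) (\<lambda>x y. sw (cop y) (\<lambda>u v. h x u v))"
    and cou_linear: "Vector_Spaces.linear sm (*) cou"
    and counit_left: "\<And>a. sw (cop a) (\<lambda>x y. sm (cou x) y) = a"
    and counit_right: "\<And>a. sw (cop a) (\<lambda>x y. sm (cou y) x) = a"
    and cop_mult:
      "\<And>a b. ten_eq sm sm (cop (a * b)) [(x * u, y * v). (x, y) \<leftarrow> cop a, (u, v) \<leftarrow> cop b]"
    and cop_one: "ten_eq sm sm (cop 1) [(1, 1)]"
    and cou_mult: "\<And>a b. cou (a * b) = cou a * cou b"
    and cou_one: "cou 1 = 1"
    and S_linear: "Vector_Spaces.linear sm sm S"
    and antipode_left: "\<And>a. sw (cop a) (\<lambda>x y. S x * y) = sm (cou a) 1"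
    and antipode_right: "\<And>a. sw (cop a) (\<lambda>x y. x * S y) = sm (cou a) 1"

definition cocommutative :: "(complex \<Rightarrow> 'm::ab_group_add \<Rightarrow> 'm) \<Rightarrow> ('m \<Rightarrow> ('m \<times> 'm) list) \<Rightarrow> bool" where
  "cocommutative sm cop \<longleftrightarrow> (\<forall>a. ten_eq sm sm (cop a) (map prod.swap (cop a)))"

text \<open>A-valued bicharacters on M (r is the bilinear map corresponding to the
  linear map on M tensor M).\<close>
definition bichar ::
  "(complex \<Rightarrow> 'm::comm_ring_1 \<Rightarrow> 'm) \<Rightarrow> ('m \<Rightarrow> ('m \<times> 'm) list) \<Rightarrow> ('m \<Rightarrow> complex)
    \<Rightarrow> (complex \<Rightarrow> 'a::comm_ring_1 \<Rightarrow> 'a) \<Rightarrow> ('m \<Rightarrow> 'm \<Rightarrow> 'a) \<Rightarrow> bool" where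
  "bichar sm cop cou smA r \<longleftrightarrow>
     bilin sm sm smA r \<and>
     (\<forall>a. r 1 a = smA (cou a) 1 \<and> r a 1 = smA (cou a) 1) \<and>
     (\<forall>a b c. r (a * b) c = sw (cop c) (\<lambda>c1 c2. r a c1 * r b c2)) \<and>
     (\<forall>a b c. r a (b * c) = sw (cop a) (\<lambda>a1 a2. r a1 b * r a2 c))"

definition conv ::
  "('m \<Rightarrow> ('m \<times> 'm) list) \<Rightarrow> ('m \<Rightarrow> 'm \<Rightarrow> 'a::comm_ring_1) \<Rightarrow> ('m \<Rightarrow> 'm \<Rightarrow> 'a) \<Rightarrow> 'm \<Rightarrow> 'm \<Rightarrow> 'a" where
  "conv cop r t a b = sw (cop a) (\<lambda>a1 a2. sw (cop b) (\<lambda>b1 b2. r a1 b1 * t a2 b2))"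

definition transp :: "('m \<Rightarrow> 'm \<Rightarrow> 'a) \<Rightarrow> 'm \<Rightarrow> 'm \<Rightarrow> 'a" where
  "transp r a b = r b a"

definition binv :: "('m \<Rightarrow> 'm) \<Rightarrow> ('m \<Rightarrow> 'm \<Rightarrow> 'a) \<Rightarrow> 'm \<Rightarrow> 'm \<Rightarrow> 'a" where
  "binv S r a b = r (S a) b"

definition symz :: "('m \<Rightarrow> ('m \<times> 'm) list) \<Rightarrow> ('m \<Rightarrow> 'm \<Rightarrow> 'a::comm_ring_1) \<Rightarrow> 'm \<Rightarrow> 'm \<Rightarrow> 'a" where
  "symz cop r = conv cop r (transp r)"

text \<open>Elements of M_A = M tensor A are formal sums [(m_i, a_i)].  EQ_r, extended A-linearly:
  m tensor c maps to sum r(m' tensor m'') m''' tensor c.\<close>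
definition EQ :: "('m \<Rightarrow> ('m \<times> 'm) list) \<Rightarrow> ('m \<Rightarrow> 'm \<Rightarrow> 'a::comm_ring_1) \<Rightarrow> ('m \<times> 'a) list \<Rightarrow> ('m \<times> 'a) list" where
  "EQ cop r xs = [(m3, r u v * c). (m, c) \<leftarrow> xs, (m1, m3) \<leftarrow> cop m, (u, v) \<leftarrow> cop m1]"

definition bullet ::
  "('m::comm_ring_1 \<Rightarrow> ('m \<times> 'm) list) \<Rightarrow> ('m \<Rightarrow> 'm \<Rightarrow> 'a::comm_ring_1)
    \<Rightarrow> ('m \<times> 'a) list \<Rightarrow> ('m \<times> 'a) list \<Rightarrow> ('m \<times> 'a) list" where
  "bullet cop t xs ys =
     [(m1 * n1, t m2 n2 * (a * b)). (m, a) \<leftarrow> xs, (n, b) \<leftarrow> ys, (m1, m2) \<leftarrow> cop m, (n1, n2) \<leftarrow> cop n]"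

end

theory Submission
  imports Defs
begin

text \<open>Elements of \<open>M \<otimes> M\<close> and of \<open>M\<^sub>A\<close> are formal sums compared through bilinear test forms,
  so every claim becomes an identity between iterated Sweedler sums. By coassociativity such a
  sum of a multilinear function depends only on the number of tensor factors, and by
  cocommutativity it is invariant under permuting them. Hence \<open>EQ t \<circ> EQ r = EQ (r \<star> t)\<close>
  and \<open>EQ \<epsilon> = id\<close> for the convolution unit \<open>\<epsilon> = \<eta> \<otimes> \<eta>\<close>; as \<open>r\<inverse> \<star> r = \<epsilon> = r \<star> r\<inverse>\<close>
  by the antipode axioms, \<open>EQ r\<inverse>\<close> inverts \<open>EQ r\<close>. Expanding \<open>r (ab \<otimes> cd)\<close> with the
  bicharacter axioms turns both \<open>EQ r (x y)\<close> and \<open>EQ r x \<bullet>\<^sub>s EQ r y\<close>, \<open>s = r \<star> r\<^sup>t\<close>, into the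
  same fourfold Sweedler sum up to a permutation of the factors. Conjugating this identity by
  \<open>EQ r\<^sub>1\<inverse>\<close> gives the theorem.\<close>

lemma vector_space_complex_mult: "vector_space ((*) :: complex \<Rightarrow> complex \<Rightarrow> complex)"
  unfolding vector_space_def module_def by (auto simp: algebra_simps)

lemma linear_functionals_separate:
  fixes s :: "complex \<Rightarrow> 'a::ab_group_add \<Rightarrow> 'a"
  assumes s: "vector_space s" and eq: "\<And>f. Vector_Spaces.linear s (*) f \<Longrightarrow> f x = f y"
  shows "x = y"
proof (rule ccontr)
  assume "x \<noteq> y"
  interpret vector_space_pair s "(*) :: complex \<Rightarrow> complex \<Rightarrow> complex"
    using s vector_space_complex_mult by (simp add: vector_space_pair_def)
  have ind: "vs1.independent {x - y}"
    using \<open>x \<noteq> y\<close> by (intro vs1.independent_insertI) (auto simp: vs1.span_empty vs1.independent_empty)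
  define f where "f = construct {x - y} (\<lambda>_. 1)"
  have lf: "Vector_Spaces.linear s (*) f"
    unfolding f_def by (rule linear_construct[OF ind])
  have "f (x - y) = 1"
    unfolding f_def by (rule construct_basis[OF ind]) simp
  moreover have "f (x - y) = f x - f y"
    using lf by (simp add: linear_diff)
  ultimately show False
    using eq[OF lf] by simp
qed

lemma sum_list_map_swap:
  fixes f :: "'x \<Rightarrow> 'y \<Rightarrow> 'c::comm_monoid_add"
  shows "sum_list (map (\<lambda>a. sum_list (map (f a) ys)) xs) = sum_list (map (\<lambda>b. sum_list (map (\<lambda>a. f a b) xs)) ys)"
  by (induction xs) (auto simp: sum_list_addf)

lemma sum_list_map_concat:
  "sum_list (map h (concat (map g xs))) = sum_list (map (\<lambda>x. sum_list (map h (g x))) xs)"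
  by (induction xs) auto

lemma sw_single: "sw [(x, y)] F = F x y"
  by (simp add: sw_def)

lemma sw_swap:
  fixes f :: "'x \<Rightarrow> 'y \<Rightarrow> 'u \<Rightarrow> 'v \<Rightarrow> 'c::comm_monoid_add"
  shows "sw xs (\<lambda>x y. sw ys (f x y)) = sw ys (\<lambda>u v. sw xs (\<lambda>x y. f x y u v))"
  unfolding sw_def using sum_list_map_swap[of "\<lambda>(x, y) (u, v). f x y u v" ys xs]
  by (simp add: case_prod_beta')

lemma sw_concat_pairs:
  "sw [(f x y u v, g x y u v). (x, y) \<leftarrow> xs, (u, v) \<leftarrow> ys] F
     = sw xs (\<lambda>x y. sw ys (\<lambda>u v. F (f x y u v) (g x y u v)))"
  by (induction xs) (auto simp: sw_def sum_list_map_concat case_prod_beta' o_def)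

lemma sw_mult_left: "(c::'c::comm_ring_1) * sw xs F = sw xs (\<lambda>x y. c * F x y)"
  by (simp add: sw_def sum_list_const_mult[symmetric] case_prod_beta')

lemma sw_mult_right: "sw xs F * (c::'c::comm_ring_1) = sw xs (\<lambda>x y. F x y * c)"
  by (simp add: sw_def sum_list_mult_const[symmetric] case_prod_beta')

lemma linear_sw: "Vector_Spaces.linear s1 s2 f \<Longrightarrow> f (sw xs F) = sw xs (\<lambda>x y. f (F x y))"
  unfolding sw_def
  by (induction xs) (auto simp: Vector_Spaces.linear_iff dest: spec[of _ 0])

lemma ten_eq_sym: "ten_eq sa sb xs ys \<Longrightarrow> ten_eq sa sb ys xs"
  unfolding ten_eq_def by auto

lemma ten_eq_trans [trans]: "ten_eq sa sb xs ys \<Longrightarrow> ten_eq sa sb ys zs \<Longrightarrow> ten_eq sa sb xs zs"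
  unfolding ten_eq_def by auto

fun cop_iter :: "('m \<Rightarrow> ('m \<times> 'm) list) \<Rightarrow> nat \<Rightarrow> 'm \<Rightarrow> 'm list list" where
  "cop_iter cop 0 a = [[a]]"
| "cop_iter cop (Suc k) a = concat (map (\<lambda>(x, y). map ((#) x) (cop_iter cop k y)) (cop a))"

lemma length_cop_iter: "l \<in> set (cop_iter cop k a) \<Longrightarrow> length l = Suc k"
  by (induction k arbitrary: a l) auto

definition swap_adj :: "nat \<Rightarrow> 'x list \<Rightarrow> 'x list" where
  "swap_adj i l = l[i := l ! Suc i, Suc i := l ! i]"

lemma swap_adj_Cons: "swap_adj (Suc i) (x # l) = x # swap_adj i l"
  by (simp add: swap_adj_def)

lemma swap_adj_0: "swap_adj 0 (x # y # l) = y # x # l"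
  by (simp add: swap_adj_def)

lemma swap_adj_list_update:
  assumes "i < k" "length l = Suc k" "j \<le> k"
  shows "swap_adj i (l[j := x]) = (swap_adj i l)[(if j = i then Suc i else if j = Suc i then i else j) := x]"
  using assms by (auto simp: swap_adj_def list_eq_iff_nth_eq nth_list_update)

lemma length_five_conv: "length l = 5 \<Longrightarrow> \<exists>x0 x1 x2 x3 x4. l = [x0, x1, x2, x3, x4]"
  by (auto simp: eval_nat_numeral length_Suc_conv)

lemma nat_le_2_cases: "(i::nat) \<le> 2 \<Longrightarrow> i = 0 \<or> i = 1 \<or> i = 2"
  by auto

lemma nat_le_4_cases: "(i::nat) \<le> 4 \<Longrightarrow> i = 0 \<or> i = 1 \<or> i = 2 \<or> i = 3 \<or> i = 4"
  by auto

section \<open>Iterated Sweedler sums\<close>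

context comm_hopf_algebra
begin

abbreviation lin :: "('m \<Rightarrow> complex) \<Rightarrow> bool" where
  "lin f \<equiv> Vector_Spaces.linear sm (*) f"

abbreviation linM :: "('m \<Rightarrow> 'm) \<Rightarrow> bool" where
  "linM f \<equiv> Vector_Spaces.linear sm sm f"

lemma lin_iff: "lin f \<longleftrightarrow> (\<forall>x y. f (x + y) = f x + f y) \<and> (\<forall>c x. f (sm c x) = c * f x)"
  using vs vector_space_complex_mult by (simp add: Vector_Spaces.linear_iff)

lemma linM_iff: "linM f \<longleftrightarrow> (\<forall>x y. f (x + y) = f x + f y) \<and> (\<forall>c x. f (sm c x) = sm c (f x))"
  using vs by (simp add: Vector_Spaces.linear_iff)

lemma bilin_iff: "bilin sm sm (*) g \<longleftrightarrow> (\<forall>x. lin (g x)) \<and> (\<forall>y. lin (\<lambda>x. g x y))"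
  by (simp add: bilin_def)

lemma bilinI: "(\<And>x. lin (g x)) \<Longrightarrow> (\<And>y. lin (\<lambda>x. g x y)) \<Longrightarrow> bilin sm sm (*) g"
  by (simp add: bilin_def)

lemma lin_sum_list_fun: "(\<And>x. x \<in> set xs \<Longrightarrow> lin (f x)) \<Longrightarrow> lin (\<lambda>a. sum_list (map (\<lambda>x. f x a) xs))"
  by (induction xs) (auto simp: lin_iff algebra_simps)

lemma lin_sw_fun: "(\<And>x y. (x, y) \<in> set xs \<Longrightarrow> lin (f x y)) \<Longrightarrow> lin (\<lambda>a. sw xs (\<lambda>x y. f x y a))"
  unfolding sw_def by (induction xs) (auto simp: lin_iff algebra_simps)

lemma lin_comp_linM: "linM f \<Longrightarrow> lin g \<Longrightarrow> lin (\<lambda>x. g (f x))"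
  by (auto simp: lin_iff linM_iff)

lemma sm_mult_left: "x * sm c y = sm c (x * y)"
  using scale_mult[of c y x] by (simp add: mult.commute)

lemma linM_mult_left: "linM (\<lambda>x. c * x)"
  by (auto simp: linM_iff algebra_simps sm_mult_left)

lemma linM_mult_right: "linM (\<lambda>x. x * c)"
  by (auto simp: linM_iff algebra_simps scale_mult)

lemma sw_cop_counit_left: "lin f \<Longrightarrow> sw (cop w) (\<lambda>y z. cou y * f z) = f w"
  using linear_sw[of sm "(*)" f "cop w" "\<lambda>y z. sm (cou y) z"] counit_left[of w] by (simp add: lin_iff)

lemma sw_cop_counit_right: "lin f \<Longrightarrow> sw (cop w) (\<lambda>y z. cou z * f y) = f w"
  using linear_sw[of sm "(*)" f "cop w" "\<lambda>y z. sm (cou z) y"] counit_right[of w] by (simp add: lin_iff)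

text \<open>\<open>sweedler k a h\<close> sums \<open>h\<close> over the \<open>k + 1\<close>-tuples of the \<open>k\<close>-fold iterated
  coproduct of \<open>a\<close>.\<close>

definition sweedler :: "nat \<Rightarrow> 'm \<Rightarrow> ('m list \<Rightarrow> complex) \<Rightarrow> complex" where
  "sweedler k a h = sum_list (map h (cop_iter cop k a))"

lemma sweedler_0 [simp]: "sweedler 0 a h = h [a]"
  by (simp add: sweedler_def)

lemma sweedler_Suc: "sweedler (Suc k) a h = sw (cop a) (\<lambda>x y. sweedler k y (\<lambda>l. h (x # l)))"
  by (simp add: sweedler_def sw_def sum_list_map_concat case_prod_beta' o_def)

lemma sweedler_2: "sweedler 2 m h = sw (cop m) (\<lambda>x y. sw (cop y) (\<lambda>u v. h [x, u, v]))"
  by (simp add: sweedler_Suc numeral_2_eq_2)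

lemma sweedler_cong: "(\<And>l. length l = Suc k \<Longrightarrow> h l = h' l) \<Longrightarrow> sweedler k a h = sweedler k a h'"
  unfolding sweedler_def by (rule arg_cong[where f = sum_list], rule map_cong) (auto dest: length_cop_iter)

lemma sweedler_sw: "sweedler k a (\<lambda>l. sw ys (\<lambda>u v. f u v l)) = sw ys (\<lambda>u v. sweedler k a (f u v))"
  unfolding sweedler_def sw_def using sum_list_map_swap by (simp add: case_prod_beta')

lemma sweedler_commute: "sweedler k a (\<lambda>l. sweedler j b (f l)) = sweedler j b (\<lambda>l'. sweedler k a (\<lambda>l. f l l'))"
  unfolding sweedler_def by (rule sum_list_map_swap)

lemma lin_sweedler_fun: "(\<And>l. length l = Suc k \<Longrightarrow> lin (f l)) \<Longrightarrow> lin (\<lambda>v. sweedler k u (\<lambda>l. f l v))"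
  unfolding sweedler_def by (rule lin_sum_list_fun) (auto dest: length_cop_iter)

definition multilin :: "nat \<Rightarrow> ('m list \<Rightarrow> complex) \<Rightarrow> bool" where
  "multilin k h \<longleftrightarrow> (\<forall>pre post. length pre + length post = k \<longrightarrow> lin (\<lambda>x. h (pre @ x # post)))"

lemma multilinD: "multilin k h \<Longrightarrow> length pre + length post = k \<Longrightarrow> lin (\<lambda>x. h (pre @ x # post))"
  by (simp add: multilin_def)

lemma multilin_iff_update:
  "multilin k h \<longleftrightarrow> (\<forall>l i. length l = Suc k \<longrightarrow> i \<le> k \<longrightarrow> lin (\<lambda>x. h (l[i := x])))"
proof
  assume m: "multilin k h"
  show "\<forall>l i. length l = Suc k \<longrightarrow> i \<le> k \<longrightarrow> lin (\<lambda>x. h (l[i := x]))"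
  proof (intro allI impI)
    fix l :: "'m list" and i assume l: "length l = Suc k" and i: "i \<le> k"
    have "l[i := x] = take i l @ x # drop (Suc i) l" for x
      using l i by (simp add: upd_conv_take_nth_drop)
    then show "lin (\<lambda>x. h (l[i := x]))"
      using multilinD[OF m, of "take i l" "drop (Suc i) l"] l i by simp
  qed
next
  assume u: "\<forall>l i. length l = Suc k \<longrightarrow> i \<le> k \<longrightarrow> lin (\<lambda>x. h (l[i := x]))"
  show "multilin k h"
    unfolding multilin_def
  proof (intro allI impI)
    fix pre post :: "'m list" assume len: "length pre + length post = k"
    have "lin (\<lambda>x. h ((pre @ 0 # post)[length pre := x]))"
      using u[rule_format, of "pre @ 0 # post" "length pre"] len by simp
    then show "lin (\<lambda>x. h (pre @ x # post))"
      by (simp add: list_update_append)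
  qed
qed

lemma multilinI_update:
  "(\<And>l i. length l = Suc k \<Longrightarrow> i \<le> k \<Longrightarrow> lin (\<lambda>x. h (l[i := x]))) \<Longrightarrow> multilin k h"
  by (simp add: multilin_iff_update)

lemma multilin_Cons: "multilin (Suc k) h \<Longrightarrow> multilin k (\<lambda>l. h (x # l))"
  unfolding multilin_def
proof (intro allI impI)
  fix pre post :: "'m list"
  assume m: "\<forall>pre post. length pre + length post = Suc k \<longrightarrow> lin (\<lambda>x. h (pre @ x # post))"
    and "length pre + length post = k"
  then have "lin (\<lambda>y. h ((x # pre) @ y # post))" using m[rule_format, of "x # pre" post] by simp
  then show "lin (\<lambda>y. h (x # pre @ y # post))" by simp
qed

lemma lin_multilin_head: "multilin k h \<Longrightarrow> length l = k \<Longrightarrow> lin (\<lambda>x. h (x # l))"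
  using multilinD[of k h "[]" l] by simp

lemma multilin_append_left:
  "multilin (Suc (i + j)) h \<Longrightarrow> length l2 = Suc j \<Longrightarrow> multilin i (\<lambda>l1. h (l1 @ l2))"
  unfolding multilin_def
proof (intro allI impI)
  fix pre post :: "'m list"
  assume "\<forall>pre post. length pre + length post = Suc (i + j) \<longrightarrow> lin (\<lambda>x. h (pre @ x # post))"
    and "length l2 = Suc j" and "length pre + length post = i"
  then have "lin (\<lambda>x. h (pre @ x # (post @ l2)))" by simp
  then show "lin (\<lambda>x. h ((pre @ x # post) @ l2))" by simp
qed

lemma multilin_append_right:
  "multilin (Suc (i + j)) h \<Longrightarrow> length l1 = Suc i \<Longrightarrow> multilin j (\<lambda>l2. h (l1 @ l2))"
  unfolding multilin_def
proof (intro allI impI)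
  fix pre post :: "'m list"
  assume m: "\<forall>pre post. length pre + length post = Suc (i + j) \<longrightarrow> lin (\<lambda>x. h (pre @ x # post))"
    and "length l1 = Suc i" and "length pre + length post = j"
  then have "lin (\<lambda>x. h ((l1 @ pre) @ x # post))" using m[rule_format, of "l1 @ pre" post] by simp
  then show "lin (\<lambda>x. h (l1 @ pre @ x # post))" by simp
qed

lemma multilin_sweedler_inner:
  "(\<And>l'. length l' = Suc j \<Longrightarrow> multilin k (\<lambda>l. F l l')) \<Longrightarrow> multilin k (\<lambda>l. sweedler j b (F l))"
  unfolding multilin_def by (auto intro!: lin_sweedler_fun)

lemma lin_sweedler: "multilin k h \<Longrightarrow> lin (\<lambda>a. sweedler k a h)"
proof (induction k arbitrary: h)
  case 0
  then show ?case using lin_multilin_head[of 0 h "[]"] by simp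
next
  case (Suc k)
  have "bilin sm sm (*) (\<lambda>x y. sweedler k y (\<lambda>l. h (x # l)))"
  proof (rule bilinI)
    show "lin (\<lambda>y. sweedler k y (\<lambda>l. h (x # l)))" for x
      using Suc by (simp add: multilin_Cons)
    show "lin (\<lambda>x. sweedler k y (\<lambda>l. h (x # l)))" for y
      by (rule lin_sweedler_fun) (auto intro: lin_multilin_head[OF Suc.prems])
  qed
  from cop_linear[OF this] show ?case by (simp add: sweedler_Suc)
qed

lemma sweedler_split:
  "multilin (Suc (i + j)) h \<Longrightarrow>
     sweedler (Suc (i + j)) a h = sw (cop a) (\<lambda>x y. sweedler i x (\<lambda>l1. sweedler j y (\<lambda>l2. h (l1 @ l2))))"
proof (induction i arbitrary: h a)
  case 0
  then show ?case by (simp add: sweedler_Suc)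
next
  case (Suc i)
  define K where "K x u v = sweedler i u (\<lambda>l1. sweedler j v (\<lambda>l2. h (x # l1 @ l2)))" for x u v
  have ml: "multilin (Suc (i + j)) (\<lambda>l. h (x # l))" for x
    using Suc.prems by (simp add: multilin_Cons)
  have K: "trilin sm (*) K"
    unfolding trilin_def
  proof (intro conjI allI)
    fix x u show "lin (K x u)"
      unfolding K_def by (rule lin_sweedler_fun) (auto intro!: lin_sweedler multilin_append_right[OF ml])
  next
    fix x v show "lin (\<lambda>u. K x u v)"
      unfolding K_def
      by (intro lin_sweedler multilin_sweedler_inner) (auto intro: multilin_append_left[OF ml])
  next
    fix u v show "lin (\<lambda>x. K x u v)"
      unfolding K_def by (intro lin_sweedler_fun) (auto intro!: lin_multilin_head[OF Suc.prems])
  qed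
  have "sweedler (Suc (Suc i + j)) a h = sw (cop a) (\<lambda>x y. sweedler (Suc (i + j)) y (\<lambda>l. h (x # l)))"
    by (simp add: sweedler_Suc)
  also have "\<dots> = sw (cop a) (\<lambda>x y. sw (cop y) (\<lambda>u v. K x u v))"
    unfolding K_def using Suc.IH[OF ml] by simp
  also have "\<dots> = sw (cop a) (\<lambda>x y. sw (cop x) (\<lambda>u v. K u v y))"
    by (rule coassoc[OF K, symmetric])
  also have "\<dots> = sw (cop a) (\<lambda>x y. sweedler (Suc i) x (\<lambda>l1. sweedler j y (\<lambda>l2. h (l1 @ l2))))"
    by (simp add: sweedler_Suc K_def)
  finally show ?case .
qed

lemma sweedler_mult:
  "multilin k h \<Longrightarrow> sweedler k (m * n) h = sweedler k m (\<lambda>l. sweedler k n (\<lambda>l'. h (map2 (*) l l')))"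
proof (induction k arbitrary: h m n)
  case 0
  then show ?case by simp
next
  case (Suc k)
  define F where "F x y = sweedler k y (\<lambda>l. h (x # l))" for x y
  have F: "bilin sm sm (*) F"
    unfolding F_def
  proof (rule bilinI)
    show "lin (\<lambda>y. sweedler k y (\<lambda>l. h (x # l)))" for x
      using Suc.prems by (simp add: multilin_Cons lin_sweedler)
    show "lin (\<lambda>x. sweedler k y (\<lambda>l. h (x # l)))" for y
      by (rule lin_sweedler_fun) (rule lin_multilin_head[OF Suc.prems], simp)
  qed
  have "sweedler (Suc k) (m * n) h = sw (cop (m * n)) F"
    by (simp add: sweedler_Suc F_def[abs_def])
  also have "\<dots> = sw [(x * u, y * v). (x, y) \<leftarrow> cop m, (u, v) \<leftarrow> cop n] F"
    using cop_mult[of m n] F unfolding ten_eq_def by blast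
  also have "\<dots> = sw (cop m) (\<lambda>x y. sw (cop n) (\<lambda>u v. F (x * u) (y * v)))"
    by (rule sw_concat_pairs)
  also have "\<dots> = sw (cop m) (\<lambda>x y. sw (cop n) (\<lambda>u v.
        sweedler k y (\<lambda>l. sweedler k v (\<lambda>l'. h (x * u # map2 (*) l l')))))"
    unfolding F_def using Suc.IH Suc.prems by (simp add: multilin_Cons)
  also have "\<dots> = sweedler (Suc k) m (\<lambda>l. sweedler (Suc k) n (\<lambda>l'. h (map2 (*) l l')))"
    by (simp add: sweedler_Suc sweedler_sw) (rule sw_swap)
  finally show ?case .
qed

lemma sweedler_2_left:
  "multilin 2 h \<Longrightarrow> sweedler 2 m h = sw (cop m) (\<lambda>x y. sw (cop x) (\<lambda>u v. h [u, v, y]))"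
  using sweedler_split[of 1 0 h m] by (simp add: numeral_2_eq_2 sweedler_Suc)

lemma sweedler_4_split:
  assumes h: "multilin 4 h"
  shows "sweedler 4 m h = sw (cop m) (\<lambda>x y. sw (cop x) (\<lambda>u v.
           sw (cop y) (\<lambda>x' y'. sw (cop x') (\<lambda>u' v'. h [u, v, u', v', y']))))"
proof -
  have h': "multilin (Suc (1 + 2)) h"
    using h by (simp add: eval_nat_numeral)
  have "sweedler 4 m h = sw (cop m) (\<lambda>x y. sweedler 1 x (\<lambda>l1. sweedler 2 y (\<lambda>l2. h (l1 @ l2))))"
    using sweedler_split[OF h', of m] by (simp add: eval_nat_numeral)
  also have "\<dots> = sw (cop m) (\<lambda>x y. sweedler 1 x (\<lambda>l1.
               sw (cop y) (\<lambda>x' y'. sweedler 1 x' (\<lambda>l2. h (l1 @ l2 @ [y'])))))"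
  proof (intro arg_cong[where f = "sw (cop m)"] ext sweedler_cong)
    fix l1 :: "'m list" and y assume "length l1 = Suc 1"
    then show "sweedler 2 y (\<lambda>l2. h (l1 @ l2)) = sw (cop y) (\<lambda>x' y'. sweedler 1 x' (\<lambda>l2. h (l1 @ l2 @ [y'])))"
      using sweedler_split[of 1 0 "\<lambda>l2. h (l1 @ l2)" y] multilin_append_right[OF h']
      by (simp add: numeral_2_eq_2)
  qed
  finally show ?thesis
    by (simp add: sweedler_Suc)
qed

lemma sweedler_nest_last:
  assumes h: "multilin 4 (\<lambda>M. F (M!0) (M!1) [M!2, M!3, M!4])"
  shows "sweedler 2 m (\<lambda>l. sweedler 2 (l!2) (F (l!0) (l!1))) = sweedler 4 m (\<lambda>M. F (M!0) (M!1) [M!2, M!3, M!4])"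
    (is "_ = sweedler 4 m ?h")
proof -
  have "multilin (Suc (Suc 2)) ?h"
    using h by (simp add: numeral_eq_Suc)
  from multilin_Cons[OF multilin_Cons[OF this]]
  have h2: "multilin 2 (\<lambda>l2. F u v [l2!0, l2!1, l2!2])" for u v
    by simp
  have "multilin 2 (\<lambda>l. sweedler 2 (l!2) (\<lambda>l2. ?h (l!0 # l!1 # l2)))"
  proof (rule multilinI_update)
    fix l :: "'m list" and i :: nat assume l: "length l = Suc 2" and i: "i \<le> 2"
    have "lin (\<lambda>x. ?h (x # w # l2))" "lin (\<lambda>x. ?h (w # x # l2))" if "length l2 = 3" for w l2
      using multilinD[OF h, of "[]" "w # l2"] multilinD[OF h, of "[w]" l2] that by simp_all
    then show "lin (\<lambda>x. sweedler 2 (l[i := x] ! 2) (\<lambda>l2. ?h (l[i := x] ! 0 # l[i := x] ! 1 # l2)))"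
      using nat_le_2_cases[OF i] l by (auto intro!: lin_sweedler_fun lin_sweedler h2[simplified])
  qed
  moreover have "sweedler 2 m (\<lambda>l. sweedler 2 (l!2) (F (l!0) (l!1)))
      = sweedler 2 m (\<lambda>l. sweedler 2 (l!2) (\<lambda>l2. ?h (l!0 # l!1 # l2)))"
    by (intro sweedler_cong) (auto simp: eval_nat_numeral length_Suc_conv)
  ultimately have "sweedler 2 m (\<lambda>l. sweedler 2 (l!2) (F (l!0) (l!1)))
      = sw (cop m) (\<lambda>x y. sweedler 1 x (\<lambda>l1. sweedler 2 y (\<lambda>l2. ?h (l1 @ l2))))"
    by (simp add: sweedler_2_left sweedler_Suc)
  also have "\<dots> = sweedler 4 m ?h"
    using sweedler_split[of 1 2 ?h m] h by (simp add: eval_nat_numeral)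
  finally show ?thesis .
qed

lemma sweedler_nest_first:
  assumes h: "multilin 4 h"
  shows "sweedler 2 m (\<lambda>l. sw (cop (l ! 0)) (\<lambda>a1 a2. sw (cop (l ! 1)) (\<lambda>c1 c2. h [a1, a2, c1, c2, l ! 2])))
       = sweedler 4 m h"
proof -
  have hl: "lin (\<lambda>x. h (pre @ x # post))" if "length pre + length post = 4" for pre post
    using multilinD[OF h that] .
  have "multilin 2 (\<lambda>l. sw (cop (l ! 0)) (\<lambda>a1 a2. sw (cop (l ! 1)) (\<lambda>c1 c2. h [a1, a2, c1, c2, l ! 2])))"
  proof (rule multilinI_update)
    fix l :: "'m list" and i :: nat assume l: "length l = Suc 2" and i: "i \<le> 2"
    have "lin (\<lambda>x. sw (cop x) (\<lambda>a1 a2. sw (cop w) (\<lambda>c1 c2. h [a1, a2, c1, c2, z])))" for w z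
      using hl[of "[]"] hl[of "[_]"] by (intro cop_linear) (auto simp: bilin_iff intro!: lin_sw_fun)
    moreover have "lin (\<lambda>x. sw (cop w) (\<lambda>a1 a2. sw (cop x) (\<lambda>c1 c2. h [a1, a2, c1, c2, z])))" for w z
      using hl[of "[_, _]"] hl[of "[_, _, _]"] by (intro lin_sw_fun cop_linear) (auto simp: bilin_iff)
    moreover have "lin (\<lambda>x. sw (cop w) (\<lambda>a1 a2. sw (cop w') (\<lambda>c1 c2. h [a1, a2, c1, c2, x])))" for w w'
      using hl[of "[_, _, _, _]" "[]"] by (auto intro!: lin_sw_fun)
    ultimately show "lin (\<lambda>x. sw (cop (l[i := x] ! 0)) (\<lambda>a1 a2. sw (cop (l[i := x] ! 1))
                        (\<lambda>c1 c2. h [a1, a2, c1, c2, l[i := x] ! 2])))"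
      using nat_le_2_cases[OF i] l by auto
  qed
  then have "sweedler 2 m (\<lambda>l. sw (cop (l ! 0)) (\<lambda>a1 a2. sw (cop (l ! 1)) (\<lambda>c1 c2. h [a1, a2, c1, c2, l ! 2])))
      = sw (cop m) (\<lambda>x y. sw (cop x) (\<lambda>p q. sweedler 1 p (\<lambda>l1. sweedler 1 q (\<lambda>l2. h (l1 @ l2 @ [y])))))"
    by (simp add: sweedler_2_left sweedler_Suc)
  also have "\<dots> = sw (cop m) (\<lambda>x y. sweedler 3 x (\<lambda>l1. h (l1 @ [y])))"
    using sweedler_split[of 1 1 "\<lambda>l1. h (l1 @ [y])" for y] multilin_append_left[of 3 0 h "[_]"] h
    by (simp add: eval_nat_numeral)
  also have "\<dots> = sweedler 4 m h"
    using sweedler_split[of 3 0 h m] h by (simp add: eval_nat_numeral)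
  finally show ?thesis .
qed

end

section \<open>Cocommutativity\<close>

locale cocomm_hopf_algebra = comm_hopf_algebra sm cop cou S
  for sm :: "complex \<Rightarrow> 'm::comm_ring_1 \<Rightarrow> 'm" and cop cou S +
  assumes cocomm: "cocommutative sm cop"
begin

lemma sw_cop_commute: "bilin sm sm (*) g \<Longrightarrow> sw (cop a) g = sw (cop a) (\<lambda>x y. g y x)"
proof -
  assume g: "bilin sm sm (*) g"
  have "sw (cop a) g = sw (map prod.swap (cop a)) g"
    using cocomm g unfolding cocommutative_def ten_eq_def by blast
  then show ?thesis
    by (simp add: sw_def o_def case_prod_beta')
qed

lemma multilin_swap_adj: "multilin k h \<Longrightarrow> i < k \<Longrightarrow> multilin k (\<lambda>l. h (swap_adj i l))"
proof (rule multilinI_update)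
  fix l :: "'m list" and j
  assume h: "multilin k h" and i: "i < k" and l: "length l = Suc k" and j: "j \<le> k"
  have "lin (\<lambda>x. h ((swap_adj i l)[(if j = i then Suc i else if j = Suc i then i else j) := x]))"
    using h l i j by (auto simp: multilin_iff_update swap_adj_def)
  then show "lin (\<lambda>x. h (swap_adj i (l[j := x])))"
    using swap_adj_list_update[OF i l j] by simp
qed

lemma sweedler_swap_first:
  assumes h: "multilin (Suc j) h"
  shows "sweedler (Suc j) a h = sweedler (Suc j) a (\<lambda>l. h (swap_adj 0 l))"
proof (cases j)
  case 0
  have "bilin sm sm (*) (\<lambda>x y. h [x, y])"
    using multilinD[OF h, of "[]" "[_]"] multilinD[OF h, of "[_]" "[]"] 0 by (auto simp: bilin_iff)
  then show ?thesis
    using sw_cop_commute by (simp add: 0 sweedler_Suc swap_adj_0)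
next
  case (Suc j')
  have h': "multilin (Suc (1 + j')) h"
    using h Suc by simp
  have b: "bilin sm sm (*) (\<lambda>u v. sweedler j' y (\<lambda>l. h (u # v # l)))" for y
    using multilinD[OF h', of "[_]"] multilinD[OF h', of "[]"] by (auto simp: bilin_iff intro!: lin_sweedler_fun)
  have "sweedler (Suc (1 + j')) a h = sw (cop a) (\<lambda>x y. sweedler 1 x (\<lambda>l1. sweedler j' y (\<lambda>l2. h (l1 @ l2))))"
    by (rule sweedler_split[OF h'])
  also have "\<dots> = sw (cop a) (\<lambda>x y. sweedler 1 x (\<lambda>l1. sweedler j' y (\<lambda>l2. h (swap_adj 0 (l1 @ l2)))))"
    by (simp add: sweedler_Suc sw_cop_commute[OF b] swap_adj_0)
  also have "\<dots> = sweedler (Suc (1 + j')) a (\<lambda>l. h (swap_adj 0 l))"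
    by (rule sweedler_split[OF multilin_swap_adj[OF h'], symmetric]) simp
  finally show ?thesis
    using Suc by simp
qed

lemma sweedler_swap_adj: "multilin k h \<Longrightarrow> i < k \<Longrightarrow> sweedler k a h = sweedler k a (\<lambda>l. h (swap_adj i l))"
proof (induction i arbitrary: k a h)
  case 0
  then obtain j where "k = Suc j" by (cases k) auto
  then show ?case using 0 sweedler_swap_first by simp
next
  case (Suc i)
  then obtain j where k: "k = Suc j" by (cases k) auto
  have "sweedler j y (\<lambda>l. h (x # l)) = sweedler j y (\<lambda>l. h (x # swap_adj i l))" for x y
    using Suc.IH[of j "\<lambda>l. h (x # l)"] Suc.prems k by (simp add: multilin_Cons)
  then show ?case
    by (simp add: k sweedler_Suc swap_adj_Cons)
qed

lemma sweedler_swap_adjs: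
  "multilin k h \<Longrightarrow> \<forall>i\<in>set is. i < k \<Longrightarrow> sweedler k a h = sweedler k a (\<lambda>l. h (foldr swap_adj is l))"
proof (induction "is" arbitrary: h)
  case Nil
  then show ?case by simp
next
  case (Cons i "is")
  have "sweedler k a h = sweedler k a (\<lambda>l. h (swap_adj i l))"
    using Cons.prems by (intro sweedler_swap_adj) auto
  also have "\<dots> = sweedler k a (\<lambda>l. h (swap_adj i (foldr swap_adj is l)))"
    using Cons.IH[of "\<lambda>l. h (swap_adj i l)"] Cons.prems multilin_swap_adj by auto
  finally show ?case by simp
qed

end

section \<open>Bicharacters with values in a commutative algebra\<close>

locale cocomm_hopf_coeffs = cocomm_hopf_algebra sm cop cou S + A: comm_calg smA
  for sm :: "complex \<Rightarrow> 'm::comm_ring_1 \<Rightarrow> 'm" and cop cou S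
    and smA :: "complex \<Rightarrow> 'a::comm_ring_1 \<Rightarrow> 'a"
begin

abbreviation linA :: "('m \<Rightarrow> 'a) \<Rightarrow> bool" where
  "linA f \<equiv> Vector_Spaces.linear sm smA f"

abbreviation linAC :: "('a \<Rightarrow> complex) \<Rightarrow> bool" where
  "linAC f \<equiv> Vector_Spaces.linear smA (*) f"

lemma linA_iff: "linA f \<longleftrightarrow> (\<forall>x y. f (x + y) = f x + f y) \<and> (\<forall>c x. f (sm c x) = smA c (f x))"
  using vs A.vs by (simp add: Vector_Spaces.linear_iff)

lemma linAC_iff: "linAC f \<longleftrightarrow> (\<forall>x y. f (x + y) = f x + f y) \<and> (\<forall>c x. f (smA c x) = c * f x)"
  using A.vs vector_space_complex_mult by (simp add: Vector_Spaces.linear_iff)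

lemma bilinA_iff: "bilin sm smA (*) g \<longleftrightarrow> (\<forall>x. linAC (g x)) \<and> (\<forall>y. lin (\<lambda>x. g x y))"
  by (simp add: bilin_def)

lemma
  assumes "bilin sm smA (*) g"
  shows bilinA_linAC: "linAC (g w)" and bilinA_lin: "lin (\<lambda>x. g x d)"
  using assms by (simp_all add: bilin_def)

lemma smA_mult_left: "x * smA c y = smA c (x * y)"
  using A.scale_mult[of c y x] by (simp add: mult.commute)

lemma smA_add: "smA c (x + y) = smA c x + smA c y"
  using A.vs by (simp add: vector_space_def module_def)

lemma smA_smA: "smA a (smA b x) = smA (a * b) x"
  using A.vs by (simp add: vector_space_def module_def)

lemma smA_zero: "smA c 0 = 0"
  using smA_add[of c 0 0] by simp

lemma linA_mult_left: "linA f \<Longrightarrow> linA (\<lambda>x. c * f x)"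
  by (auto simp: linA_iff distrib_left smA_mult_left)

lemma linA_mult_right: "linA f \<Longrightarrow> linA (\<lambda>x. f x * c)"
  by (auto simp: linA_iff distrib_right A.scale_mult)

lemma linA_comp_linM: "linM f \<Longrightarrow> linA F \<Longrightarrow> linA (\<lambda>x. F (f x))"
  by (auto simp: linM_iff linA_iff)

lemma lin_comp_linA: "linA f \<Longrightarrow> linAC g \<Longrightarrow> lin (\<lambda>x. g (f x))"
  by (auto simp: lin_iff linA_iff linAC_iff)

lemma linAC_mult_left: "linAC g \<Longrightarrow> linAC (\<lambda>x. g (c * x))"
  by (auto simp: linAC_iff distrib_left smA_mult_left)

lemma linAC_mult_right: "linAC g \<Longrightarrow> linAC (\<lambda>x. g (x * c))"
  by (auto simp: linAC_iff distrib_right A.scale_mult[symmetric])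

lemma linA_sw_fun: "(\<And>x y. (x, y) \<in> set xs \<Longrightarrow> linA (f x y)) \<Longrightarrow> linA (\<lambda>a. sw xs (\<lambda>x y. f x y a))"
  unfolding sw_def by (induction xs) (auto simp: linA_iff algebra_simps smA_add smA_zero)

lemma linAC_sw_fun: "(\<And>x y. (x, y) \<in> set xs \<Longrightarrow> linAC (f x y)) \<Longrightarrow> linAC (\<lambda>a. sw xs (\<lambda>x y. f x y a))"
  unfolding sw_def by (induction xs) (auto simp: linAC_iff algebra_simps)

lemma cop_linearA: "bilin sm sm smA F \<Longrightarrow> linA (\<lambda>a. sw (cop a) F)"
proof -
  assume F: "bilin sm sm smA F"
  have lin_f: "lin (\<lambda>a. f (sw (cop a) F))" if f: "linAC f" for f
  proof -
    have "bilin sm sm (*) (\<lambda>u v. f (F u v))"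
      using F f unfolding bilin_def by (auto intro: lin_comp_linA)
    from cop_linear[OF this] show ?thesis
      by (simp add: linear_sw[OF f])
  qed
  \<comment> \<open>linearity into \<open>A\<close> is tested against the functionals \<open>A \<rightarrow> \<complex>\<close>, which separate points\<close>
  have "u = v" if "\<And>f. linAC f \<Longrightarrow> f u = f v" for u v
    using linear_functionals_separate[OF A.vs] that by blast
  then show ?thesis
    unfolding linA_iff using lin_f
    by (auto simp: lin_iff linAC_iff linear_sw)
qed

lemma bichar_bilin: "bichar sm cop cou smA r \<Longrightarrow> bilin sm sm smA r"
  by (simp add: bichar_def)

lemma
  assumes "bilin sm sm smA r"
  shows bilin_linA_right: "linA (r x)" and bilin_linA_left: "linA (\<lambda>x. r x y)"
  using assms by (simp_all add: bilin_def)

lemma conv_bilin: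
  assumes r: "bilin sm sm smA r" and t: "bilin sm sm smA t"
  shows "bilin sm sm smA (conv cop r t)"
  unfolding bilin_def conv_def
proof (intro conjI allI)
  fix a
  show "linA (\<lambda>b. sw (cop a) (\<lambda>a1 a2. sw (cop b) (\<lambda>b1 b2. r a1 b1 * t a2 b2)))"
    using r t by (auto simp: bilin_def intro!: linA_sw_fun cop_linearA linA_mult_left linA_mult_right)
next
  fix b
  have "bilin sm sm smA (\<lambda>a1 a2. sw (cop b) (\<lambda>b1 b2. r a1 b1 * t a2 b2))"
    using r t by (auto simp: bilin_def intro!: linA_sw_fun linA_mult_left linA_mult_right)
  then show "linA (\<lambda>a. sw (cop a) (\<lambda>a1 a2. sw (cop b) (\<lambda>b1 b2. r a1 b1 * t a2 b2)))"
    by (rule cop_linearA)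
qed

lemma symz_bilin: "bilin sm sm smA r \<Longrightarrow> bilin sm sm smA (symz cop r)"
  unfolding symz_def by (intro conv_bilin) (simp_all add: bilin_def transp_def[abs_def])

lemma binv_bilin: "bilin sm sm smA r \<Longrightarrow> bilin sm sm smA (binv S r)"
  unfolding bilin_def binv_def by (auto intro: linA_comp_linM S_linear)

text \<open>The unit \<open>\<eta> \<otimes> \<eta>\<close> of convolution.\<close>

definition cou_pair :: "'m \<Rightarrow> 'm \<Rightarrow> 'a" where
  "cou_pair x y = smA (cou x * cou y) 1"

lemma cou_pair_scale: "linAC f \<Longrightarrow> f (cou_pair u v * c) = cou u * (cou v * f c)"
  by (simp add: cou_pair_def A.scale_mult[symmetric] linAC_iff)

text \<open>Formal sums are compared through bilinear test forms \<open>g\<close>; these are the pullbacks of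
  \<open>g\<close> along \<open>EQ\<close> and along the product \<open>bullet\<close>.\<close>

definition EQ_pullback :: "('m \<Rightarrow> 'm \<Rightarrow> 'a) \<Rightarrow> ('m \<Rightarrow> 'a \<Rightarrow> complex) \<Rightarrow> 'm \<Rightarrow> 'a \<Rightarrow> complex" where
  "EQ_pullback q g m c = sw (cop m) (\<lambda>m1 m3. sw (cop m1) (\<lambda>u v. g m3 (q u v * c)))"

definition bullet_pullback ::
  "('m \<Rightarrow> 'm \<Rightarrow> 'a) \<Rightarrow> ('m \<Rightarrow> 'a \<Rightarrow> complex) \<Rightarrow> 'm \<Rightarrow> 'a \<Rightarrow> 'm \<Rightarrow> 'a \<Rightarrow> complex" where
  "bullet_pullback t g m a n b = sw (cop m) (\<lambda>m1 m2. sw (cop n) (\<lambda>n1 n2. g (m1 * n1) (t m2 n2 * (a * b))))"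

lemma sw_EQ: "sw (EQ cop q xs) g = sw xs (EQ_pullback q g)"
  unfolding EQ_def EQ_pullback_def
  by (induction xs) (auto simp: sw_def sum_list_map_concat case_prod_beta' o_def)

lemma sw_bullet: "sw (bullet cop t xs ys) g = sw xs (\<lambda>m a. sw ys (bullet_pullback t g m a))"
  unfolding bullet_def bullet_pullback_def
  by (induction xs) (auto simp: sw_def sum_list_map_concat case_prod_beta' o_def)

lemma bilinA_sw_fun:
  "(\<And>x y. (x, y) \<in> set xs \<Longrightarrow> bilin sm smA (*) (F x y)) \<Longrightarrow> bilin sm smA (*) (\<lambda>m a. sw xs (\<lambda>x y. F x y m a))"
  by (auto simp: bilinA_iff intro!: lin_sw_fun linAC_sw_fun)

lemma bilin_EQ_pullback:
  assumes q: "bilin sm sm smA q" and g: "bilin sm smA (*) g"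
  shows "bilin sm smA (*) (EQ_pullback q g)"
proof -
  note gA = bilinA_linAC[OF g] and gM = bilinA_lin[OF g]
  have inner: "bilin sm sm (*) (\<lambda>u v. g m3 (q u v * c))" for m3 c
    by (auto simp: bilin_iff intro!: lin_comp_linA[OF _ gA] linA_mult_right bilin_linA_right[OF q] bilin_linA_left[OF q])
  have "bilin sm sm (*) (\<lambda>m1 m3. sw (cop m1) (\<lambda>u v. g m3 (q u v * c)))" for c
    by (rule bilinI) (auto intro!: lin_sw_fun gM cop_linear[OF inner])
  then show ?thesis
    unfolding EQ_pullback_def bilinA_iff
    by (auto intro!: linAC_sw_fun linAC_mult_left gA cop_linear)
qed

lemma bilin_EQ_pullback_param:
  "(\<And>n c. bilin sm smA (*) (\<lambda>m a. H m a n c)) \<Longrightarrow> bilin sm smA (*) (\<lambda>m a. EQ_pullback q (H m a) n b)"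
  unfolding EQ_pullback_def by (intro bilinA_sw_fun)

lemma
  assumes t: "bilin sm sm smA t" and g: "bilin sm smA (*) g"
  shows bilin_bullet_pullback_left: "bilin sm smA (*) (\<lambda>m a. bullet_pullback t g m a n b)"
    and bilin_bullet_pullback_right: "bilin sm smA (*) (bullet_pullback t g m a)"
proof -
  note gA = bilinA_linAC[OF g] and gM = bilinA_lin[OF g]
  have "lin (\<lambda>m. bullet_pullback t g m a n b)" for a n b
    unfolding bullet_pullback_def
  proof (intro cop_linear bilinI)
    show "lin (\<lambda>m2. sw (cop n) (\<lambda>n1 n2. g (m1 * n1) (t m2 n2 * (a * b))))" for m1
      by (intro lin_sw_fun lin_comp_linA[OF _ gA] linA_mult_right bilin_linA_left[OF t])
    show "lin (\<lambda>m1. sw (cop n) (\<lambda>n1 n2. g (m1 * n1) (t m2 n2 * (a * b))))" for m2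
      by (intro lin_sw_fun lin_comp_linM[OF linM_mult_right gM])
  qed
  moreover have "lin (\<lambda>n. bullet_pullback t g m a n b)" for m a b
    unfolding bullet_pullback_def
  proof (intro lin_sw_fun cop_linear bilinI)
    show "lin (\<lambda>n2. g (m1 * n1) (t m2 n2 * (a * b)))" for m1 m2 n1
      by (intro lin_comp_linA[OF _ gA] linA_mult_right bilin_linA_right[OF t])
    show "lin (\<lambda>n1. g (m1 * n1) (t m2 n2 * (a * b)))" for m1 m2 n2
      by (rule lin_comp_linM[OF linM_mult_left gM])
  qed
  moreover have "linAC (\<lambda>a. bullet_pullback t g m a n b)" "linAC (bullet_pullback t g m a n)" for m a n b
    unfolding bullet_pullback_def
    by (intro linAC_sw_fun linAC_mult_right[OF linAC_mult_left[OF gA]] linAC_mult_left[OF linAC_mult_left[OF gA]])+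
  ultimately show "bilin sm smA (*) (\<lambda>m a. bullet_pullback t g m a n b)" "bilin sm smA (*) (bullet_pullback t g m a)"
    by (auto simp: bilinA_iff)
qed

lemma EQ_pullback_sweedler:
  assumes q: "bilin sm sm smA q" and g: "bilin sm smA (*) g"
  shows "EQ_pullback q g m c = sweedler 2 m (\<lambda>l. g (l!2) (q (l!0) (l!1) * c))"
proof -
  note gA = bilinA_linAC[OF g] and gM = bilinA_lin[OF g]
  have "multilin 2 (\<lambda>l. g (l!2) (q (l!0) (l!1) * c))"
    by (auto intro!: multilinI_update lin_comp_linA[OF _ gA] gM linA_mult_right
        bilin_linA_left[OF q] bilin_linA_right[OF q] dest!: nat_le_2_cases)
  from sweedler_2_left[OF this] show ?thesis
    by (simp add: EQ_pullback_def)
qed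

lemma EQ_cong:
  assumes q: "bilin sm sm smA q" and e: "ten_eq sm smA xs ys"
  shows "ten_eq sm smA (EQ cop q xs) (EQ cop q ys)"
  using e bilin_EQ_pullback[OF q] by (simp add: ten_eq_def sw_EQ)

lemma bullet_cong:
  assumes t: "bilin sm sm smA t" and e1: "ten_eq sm smA xs xs'" and e2: "ten_eq sm smA ys ys'"
  shows "ten_eq sm smA (bullet cop t xs ys) (bullet cop t xs' ys')"
  unfolding ten_eq_def
proof (intro allI impI)
  fix g :: "'m \<Rightarrow> 'a \<Rightarrow> complex" assume g: "bilin sm smA (*) g"
  have "sw xs (\<lambda>m a. sw ys (bullet_pullback t g m a)) = sw xs (\<lambda>m a. sw ys' (bullet_pullback t g m a))"
    using e2 bilin_bullet_pullback_right[OF t g] by (simp add: ten_eq_def)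
  also have "\<dots> = sw xs' (\<lambda>m a. sw ys' (bullet_pullback t g m a))"
    using e1 bilinA_sw_fun[of ys' "\<lambda>n b m a. bullet_pullback t g m a n b", OF bilin_bullet_pullback_left[OF t g]]
    by (simp add: ten_eq_def)
  finally show "sw (bullet cop t xs ys) g = sw (bullet cop t xs' ys') g"
    by (simp add: sw_bullet)
qed

section \<open>Composition and inversion of \<open>EQ\<close>\<close>

lemma EQ_pullback_EQ_pullback:
  assumes t1: "bilin sm sm smA t1" and t2: "bilin sm sm smA t2" and g: "bilin sm smA (*) g"
  shows "EQ_pullback t1 (EQ_pullback t2 g) m c = EQ_pullback (conv cop t1 t2) g m c"
proof -
  note gA = bilinA_linAC[OF g] and gM = bilinA_lin[OF g]
  define h where "h l = g (l!4) (t2 (l!2) (l!3) * (t1 (l!0) (l!1) * c))" for l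
  define h' where "h' l = g (l!4) (t2 (l!1) (l!3) * (t1 (l!0) (l!2) * c))" for l
  have mh: "multilin 4 h" and mh': "multilin 4 h'"
    unfolding h_def h'_def
    by (auto intro!: multilinI_update lin_comp_linA[OF _ gA] gM linA_mult_left linA_mult_right
        bilin_linA_left[OF t1] bilin_linA_right[OF t1] bilin_linA_left[OF t2] bilin_linA_right[OF t2]
        dest!: nat_le_4_cases)
  have "EQ_pullback t1 (EQ_pullback t2 g) m c = sweedler 4 m h"
    using sweedler_4_split[OF mh] by (simp add: h_def EQ_pullback_def)
  also have "\<dots> = sweedler 4 m (\<lambda>l. h (swap_adj 1 l))" \<comment> \<open>cocommutativity\<close>
    by (rule sweedler_swap_adj[OF mh]) simp
  also have "\<dots> = sweedler 4 m h'"
    by (rule sweedler_cong) (simp add: h_def h'_def swap_adj_def nth_list_update numeral_2_eq_2)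
  also have "\<dots> = sw (cop m) (\<lambda>x w. sw (cop x) (\<lambda>x1 x2. sw (cop w) (\<lambda>y z. sw (cop y)
            (\<lambda>y1 y2. g z (t2 x2 y2 * (t1 x1 y1 * c))))))"
    using sweedler_4_split[OF mh'] by (simp add: h'_def)
  also have "\<dots> = sw (cop m) (\<lambda>x w. sw (cop w) (\<lambda>y z. sw (cop x) (\<lambda>x1 x2. sw (cop y)
            (\<lambda>y1 y2. g z (t2 x2 y2 * (t1 x1 y1 * c))))))"
    by (intro arg_cong[where f = "sw (cop m)"] ext) (rule sw_swap)
  also have "\<dots> = sw (cop m) (\<lambda>x w. sw (cop w) (\<lambda>y z. g z (conv cop t1 t2 x y * c)))"
    unfolding conv_def by (simp only: sw_mult_right linear_sw[OF gA]) (simp add: ac_simps)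
  also have "\<dots> = EQ_pullback (conv cop t1 t2) g m c"
    by (simp add: EQ_pullback_sweedler[OF conv_bilin[OF t1 t2] g] sweedler_2)
  finally show ?thesis .
qed

lemma EQ_EQ_conv:
  assumes "bilin sm sm smA t1" and "bilin sm sm smA t2"
  shows "ten_eq sm smA (EQ cop t2 (EQ cop t1 xs)) (EQ cop (conv cop t1 t2) xs)"
  unfolding ten_eq_def sw_EQ
proof (intro allI impI arg_cong[where f = "sw xs"] ext)
  fix g m c assume "bilin sm smA (*) g"
  then show "EQ_pullback t1 (EQ_pullback t2 g) m c = EQ_pullback (conv cop t1 t2) g m c"
    by (rule EQ_pullback_EQ_pullback[OF assms])
qed

lemma EQ_cou_pair: "ten_eq sm smA (EQ cop cou_pair xs) xs"
  unfolding ten_eq_def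
proof (intro allI impI)
  fix g :: "'m \<Rightarrow> 'a \<Rightarrow> complex" assume g: "bilin sm smA (*) g"
  note gA = bilinA_linAC[OF g] and gM = bilinA_lin[OF g]
  have "sw (cop w) (\<lambda>u v. cou u * (cou v * d)) = cou w * d" for w d
    using cou_linear by (intro sw_cop_counit_left) (simp add: lin_iff algebra_simps)
  then have "EQ_pullback cou_pair g = g"
    by (simp add: EQ_pullback_def cou_pair_scale[OF gA] sw_cop_counit_left[OF gM] fun_eq_iff)
  then show "sw (EQ cop cou_pair xs) g = sw xs g"
    by (simp add: sw_EQ)
qed

lemma bichar_scale_one_left:
  assumes r: "bichar sm cop cou smA r"
  shows "r (sm c 1) y = smA (c * cou y) 1"
proof -
  have "r (sm c 1) y = smA c (r 1 y)"
    using bilin_linA_left[OF bichar_bilin[OF r]] by (simp add: linA_iff)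
  then show ?thesis
    using r by (simp add: bichar_def smA_smA)
qed

lemma conv_binv_left: "bichar sm cop cou smA r \<Longrightarrow> conv cop (binv S r) r = cou_pair"
proof (intro ext)
  fix x y assume r: "bichar sm cop cou smA r"
  have mult: "r (a * b) c = sw (cop c) (\<lambda>c1 c2. r a c1 * r b c2)" for a b c
    using r by (simp add: bichar_def)
  have "conv cop (binv S r) r x y = sw (cop x) (\<lambda>x1 x2. r (S x1 * x2) y)"
    by (simp add: conv_def binv_def mult)
  also have "\<dots> = r (sw (cop x) (\<lambda>x1 x2. S x1 * x2)) y"
    by (rule linear_sw[OF bilin_linA_left[OF bichar_bilin[OF r]], symmetric])
  also have "\<dots> = cou_pair x y"
    using r by (simp add: antipode_left cou_pair_def bichar_scale_one_left)
  finally show "conv cop (binv S r) r x y = cou_pair x y" .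
qed

lemma conv_binv_right: "bichar sm cop cou smA r \<Longrightarrow> conv cop r (binv S r) = cou_pair"
proof (intro ext)
  fix x y assume r: "bichar sm cop cou smA r"
  have mult: "r (a * b) c = sw (cop c) (\<lambda>c1 c2. r a c1 * r b c2)" for a b c
    using r by (simp add: bichar_def)
  have "conv cop r (binv S r) x y = sw (cop x) (\<lambda>x1 x2. r (x1 * S x2) y)"
    by (simp add: conv_def binv_def mult)
  also have "\<dots> = r (sw (cop x) (\<lambda>x1 x2. x1 * S x2)) y"
    by (rule linear_sw[OF bilin_linA_left[OF bichar_bilin[OF r]], symmetric])
  also have "\<dots> = cou_pair x y"
    using r by (simp add: antipode_right cou_pair_def bichar_scale_one_left)
  finally show "conv cop r (binv S r) x y = cou_pair x y" .
qed

lemma EQ_binv_inverse: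
  assumes r: "bichar sm cop cou smA r"
  shows "ten_eq sm smA (EQ cop r (EQ cop (binv S r) xs)) xs"
    and "ten_eq sm smA (EQ cop (binv S r) (EQ cop r xs)) xs"
proof -
  have rb: "bilin sm sm smA r" and ib: "bilin sm sm smA (binv S r)"
    using r by (simp_all add: bichar_bilin binv_bilin)
  show "ten_eq sm smA (EQ cop r (EQ cop (binv S r) xs)) xs"
    using EQ_EQ_conv[OF ib rb, of xs] EQ_cou_pair[of xs] unfolding conv_binv_left[OF r] by (rule ten_eq_trans)
  show "ten_eq sm smA (EQ cop (binv S r) (EQ cop r xs)) xs"
    using EQ_EQ_conv[OF rb ib, of xs] EQ_cou_pair[of xs] unfolding conv_binv_right[OF r] by (rule ten_eq_trans)
qed

section \<open>\<open>EQ\<close> is multiplicative\<close>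

lemma bullet_cou_pair_single: "ten_eq sm smA (bullet cop cou_pair [(m, a)] [(n, b)]) [(m * n, a * b)]"
  unfolding ten_eq_def
proof (intro allI impI)
  fix g :: "'m \<Rightarrow> 'a \<Rightarrow> complex" assume g: "bilin sm smA (*) g"
  note gA = bilinA_linAC[OF g] and gM = bilinA_lin[OF g]
  have "bullet_pullback cou_pair g m a n b
      = sw (cop m) (\<lambda>m1 m2. cou m2 * sw (cop n) (\<lambda>n1 n2. cou n2 * g (m1 * n1) (a * b)))"
    by (simp add: bullet_pullback_def cou_pair_scale[OF gA] sw_mult_left)
  also have "\<dots> = sw (cop m) (\<lambda>m1 m2. cou m2 * g (m1 * n) (a * b))"
    by (simp add: sw_cop_counit_right[OF lin_comp_linM[OF linM_mult_left gM]])
  also have "\<dots> = g (m * n) (a * b)"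
    by (rule sw_cop_counit_right[OF lin_comp_linM[OF linM_mult_right gM]])
  finally show "sw (bullet cop cou_pair [(m, a)] [(n, b)]) g = sw [(m * n, a * b)] g"
    by (simp add: sw_bullet sw_single)
qed

lemma bichar_mult_mult:
  assumes r: "bichar sm cop cou smA r" and gA: "linAC f"
  shows "f (r (x0 * y0) (x1 * y1) * K) =
    sw (cop x0) (\<lambda>a1 a2. sw (cop x1) (\<lambda>c1 c2. sw (cop y0) (\<lambda>b1 b2. sw (cop y1) (\<lambda>d1 d2.
      f (r a1 c1 * r a2 d1 * (r b1 c2 * r b2 d2) * K)))))"
proof -
  have mult_left: "r (a * b) c = sw (cop c) (\<lambda>c1 c2. r a c1 * r b c2)"
    and mult_right: "r a (b * c) = sw (cop a) (\<lambda>a1 a2. r a1 b * r a2 c)" for a b c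
    using r by (simp_all add: bichar_def)
  have "bilin sm sm (*) (\<lambda>e1 e2. f (r x0 e1 * r y0 e2 * K))"
    by (auto simp: bilin_iff intro!: lin_comp_linA[OF _ gA] linA_mult_right linA_mult_left
        bilin_linA_right[OF bichar_bilin[OF r]])
  then have "f (r (x0 * y0) (x1 * y1) * K) = sw [(x * u, y * v). (x, y) \<leftarrow> cop x1, (u, v) \<leftarrow> cop y1]
      (\<lambda>e1 e2. f (r x0 e1 * r y0 e2 * K))"
    using cop_mult[of x1 y1] unfolding ten_eq_def by (simp only: mult_left sw_mult_right linear_sw[OF gA])
  also have "\<dots> = sw (cop x1) (\<lambda>c1 c2. sw (cop y1) (\<lambda>d1 d2. sw (cop x0) (\<lambda>a1 a2. sw (cop y0) (\<lambda>b1 b2.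
      f (r a1 c1 * r a2 d1 * (r b1 c2 * r b2 d2) * K)))))"
    by (simp only: sw_concat_pairs mult_right sw_mult_right sw_mult_left linear_sw[OF gA] mult.assoc)
  also have "\<dots> = sw (cop x1) (\<lambda>c1 c2. sw (cop x0) (\<lambda>a1 a2. sw (cop y1) (\<lambda>d1 d2. sw (cop y0) (\<lambda>b1 b2.
      f (r a1 c1 * r a2 d1 * (r b1 c2 * r b2 d2) * K)))))"
    by (intro arg_cong[where f = "sw _"] ext) (rule sw_swap)
  also have "\<dots> = sw (cop x0) (\<lambda>a1 a2. sw (cop x1) (\<lambda>c1 c2. sw (cop y1) (\<lambda>d1 d2. sw (cop y0) (\<lambda>b1 b2.
      f (r a1 c1 * r a2 d1 * (r b1 c2 * r b2 d2) * K)))))"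
    by (rule sw_swap)
  also have "\<dots> = sw (cop x0) (\<lambda>a1 a2. sw (cop x1) (\<lambda>c1 c2. sw (cop y0) (\<lambda>b1 b2. sw (cop y1) (\<lambda>d1 d2.
      f (r a1 c1 * r a2 d1 * (r b1 c2 * r b2 d2) * K)))))"
    by (intro arg_cong[where f = "sw _"] ext) (rule sw_swap)
  finally show ?thesis .
qed

text \<open>Tested against \<open>g\<close>, both sides of the homomorphism identity become fourfold Sweedler sums
  over \<open>m\<close> and \<open>n\<close>; these are their summands.\<close>

definition EQ_mult_term ::
  "('m \<Rightarrow> 'm \<Rightarrow> 'a) \<Rightarrow> ('m \<Rightarrow> 'a \<Rightarrow> complex) \<Rightarrow> 'a \<Rightarrow> 'm list \<Rightarrow> 'm list \<Rightarrow> complex" where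
  "EQ_mult_term r g K M N =
     g (M!4 * N!4) (r (M!0) (M!2) * r (M!1) (N!2) * (r (N!0) (M!3) * r (N!1) (N!3)) * K)"

definition bullet_symz_term ::
  "('m \<Rightarrow> 'm \<Rightarrow> 'a) \<Rightarrow> ('m \<Rightarrow> 'a \<Rightarrow> complex) \<Rightarrow> 'm list \<Rightarrow> 'm list \<Rightarrow> 'a \<Rightarrow> 'a \<Rightarrow> complex" where
  "bullet_symz_term r g lM lN A B = g (lM!0 * lN!0) (r (lM!1) (lN!1) * r (lN!2) (lM!2) * (A * B))"

definition bullet_EQ_term ::
  "('m \<Rightarrow> 'm \<Rightarrow> 'a) \<Rightarrow> ('m \<Rightarrow> 'a \<Rightarrow> complex) \<Rightarrow> 'a \<Rightarrow> 'a \<Rightarrow> 'm list \<Rightarrow> 'm list \<Rightarrow> complex" where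
  "bullet_EQ_term r g a b M N =
     bullet_symz_term r g [M!2, M!3, M!4] [N!2, N!3, N!4] (r (M!0) (M!1) * a) (r (N!0) (N!1) * b)"

lemma
  assumes r: "bilin sm sm smA r" and g: "bilin sm smA (*) g"
  shows multilin_EQ_mult_term_left: "multilin 4 (\<lambda>M. EQ_mult_term r g K M N)"
    and multilin_EQ_mult_term_right: "multilin 4 (EQ_mult_term r g K M)"
    and multilin_bullet_symz_term_left:
      "multilin 4 (\<lambda>M. bullet_symz_term r g [M!2, M!3, M!4] lN (r (M!0) (M!1) * a) B)"
    and multilin_bullet_symz_term_right:
      "multilin 4 (\<lambda>N. bullet_symz_term r g lM [N!2, N!3, N!4] A (r (N!0) (N!1) * b))"
proof -
  note gA = bilinA_linAC[OF g] and gM = bilinA_lin[OF g]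
  note lin_rules = lin_comp_linA[OF _ gA] lin_comp_linM[OF _ gM] linM_mult_left linM_mult_right
    linA_mult_left linA_mult_right bilin_linA_left[OF r] bilin_linA_right[OF r]
  show "multilin 4 (\<lambda>M. EQ_mult_term r g K M N)" "multilin 4 (EQ_mult_term r g K M)"
    "multilin 4 (\<lambda>M. bullet_symz_term r g [M!2, M!3, M!4] lN (r (M!0) (M!1) * a) B)"
    "multilin 4 (\<lambda>N. bullet_symz_term r g lM [N!2, N!3, N!4] A (r (N!0) (N!1) * b))"
    unfolding EQ_mult_term_def bullet_symz_term_def
    by (auto intro!: multilinI_update lin_rules dest!: nat_le_4_cases)
qed

lemma EQ_pullback_mult:
  assumes r: "bichar sm cop cou smA r" and g: "bilin sm smA (*) g"
  shows "EQ_pullback r g (m * n) K = sweedler 4 m (\<lambda>M. sweedler 4 n (EQ_mult_term r g K M))"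
proof -
  note gA = bilinA_linAC[OF g] and gM = bilinA_lin[OF g]
  note rb = bichar_bilin[OF r]
  define h where "h l = g (l!2) (r (l!0) (l!1) * K)" for l
  have h: "multilin 2 h"
    unfolding h_def
    by (auto intro!: multilinI_update lin_comp_linA[OF _ gA] linA_mult_right bilin_linA_left[OF rb]
        bilin_linA_right[OF rb] gM dest!: nat_le_2_cases)
  have "EQ_pullback r g (m * n) K = sweedler 2 (m * n) h"
    by (simp add: EQ_pullback_sweedler[OF rb g] h_def[abs_def])
  also have "\<dots> = sweedler 2 m (\<lambda>l. sweedler 2 n (\<lambda>l'. h (map2 (*) l l')))"
    by (rule sweedler_mult[OF h])
  also have "\<dots> = sweedler 2 m (\<lambda>l. sweedler 2 n (\<lambda>l'. g (l!2 * l'!2) (r (l!0 * l'!0) (l!1 * l'!1) * K)))"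
    by (intro sweedler_cong) (simp add: h_def)
  also have "\<dots> = sweedler 2 m (\<lambda>l. sweedler 2 n (\<lambda>l'. sw (cop (l!0)) (\<lambda>a1 a2. sw (cop (l!1)) (\<lambda>c1 c2.
       sw (cop (l'!0)) (\<lambda>b1 b2. sw (cop (l'!1)) (\<lambda>d1 d2.
         EQ_mult_term r g K [a1, a2, c1, c2, l!2] [b1, b2, d1, d2, l'!2]))))))"
    by (simp only: bichar_mult_mult[OF r gA]) (simp add: EQ_mult_term_def)
  also have "\<dots> = sweedler 2 m (\<lambda>l. sw (cop (l!0)) (\<lambda>a1 a2. sw (cop (l!1)) (\<lambda>c1 c2.
       sweedler 2 n (\<lambda>l'. sw (cop (l'!0)) (\<lambda>b1 b2. sw (cop (l'!1)) (\<lambda>d1 d2.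
         EQ_mult_term r g K [a1, a2, c1, c2, l!2] [b1, b2, d1, d2, l'!2]))))))"
    by (simp only: sweedler_sw)
  also have "\<dots> = sweedler 2 m (\<lambda>l. sw (cop (l!0)) (\<lambda>a1 a2. sw (cop (l!1)) (\<lambda>c1 c2.
       sweedler 4 n (EQ_mult_term r g K [a1, a2, c1, c2, l!2]))))"
    by (simp only: sweedler_nest_first[OF multilin_EQ_mult_term_right[OF rb g]])
  also have "\<dots> = sweedler 4 m (\<lambda>M. sweedler 4 n (EQ_mult_term r g K M))"
    by (intro sweedler_nest_first multilin_sweedler_inner multilin_EQ_mult_term_left[OF rb g])
  finally show ?thesis .
qed

lemma bullet_pullback_symz:
  assumes g: "bilin sm smA (*) g"
  shows "bullet_pullback (symz cop r) g M A N B
       = sweedler 2 M (\<lambda>lM. sweedler 2 N (\<lambda>lN. bullet_symz_term r g lM lN A B))"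
proof -
  note gA = bilinA_linAC[OF g]
  have "bullet_pullback (symz cop r) g M A N B = sw (cop M) (\<lambda>M1 M2. sw (cop N) (\<lambda>N1 N2.
      sw (cop M2) (\<lambda>a1 a2. sw (cop N2) (\<lambda>b1 b2. g (M1 * N1) (r a1 b1 * r b2 a2 * (A * B))))))"
    unfolding bullet_pullback_def symz_def conv_def transp_def by (simp only: sw_mult_right linear_sw[OF gA])
  also have "\<dots> = sw (cop M) (\<lambda>M1 M2. sw (cop M2) (\<lambda>a1 a2. sw (cop N) (\<lambda>N1 N2.
      sw (cop N2) (\<lambda>b1 b2. g (M1 * N1) (r a1 b1 * r b2 a2 * (A * B))))))"
    by (intro arg_cong[where f = "sw _"] ext) (rule sw_swap)
  finally show ?thesis
    by (simp add: sweedler_2 bullet_symz_term_def)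
qed

lemma bullet_pullback_EQ:
  assumes r: "bichar sm cop cou smA r" and g: "bilin sm smA (*) g"
  shows "sw (bullet cop (symz cop r) (EQ cop r [(m, a)]) (EQ cop r [(n, b)])) g
       = sweedler 4 m (\<lambda>M. sweedler 4 n (bullet_EQ_term r g a b M))"
proof -
  note rb = bichar_bilin[OF r]
  let ?s = "symz cop r"
  have "sw (bullet cop ?s (EQ cop r [(m, a)]) (EQ cop r [(n, b)])) g
      = EQ_pullback r (\<lambda>M A. EQ_pullback r (bullet_pullback ?s g M A) n b) m a"
    by (simp add: sw_bullet sw_EQ sw_single)
  also have "\<dots> = sweedler 2 m (\<lambda>l. EQ_pullback r (bullet_pullback ?s g (l!2) (r (l!0) (l!1) * a)) n b)"
    by (rule EQ_pullback_sweedler[OF rb bilin_EQ_pullback_param[OF bilin_bullet_pullback_left[OF symz_bilin[OF rb] g]]])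
  also have "\<dots> = sweedler 2 m (\<lambda>l. sweedler 2 n (\<lambda>l'.
      bullet_pullback ?s g (l!2) (r (l!0) (l!1) * a) (l'!2) (r (l'!0) (l'!1) * b)))"
    by (simp only: EQ_pullback_sweedler[OF rb bilin_bullet_pullback_right[OF symz_bilin[OF rb] g]])
  also have "\<dots> = sweedler 2 m (\<lambda>l. sweedler 2 (l!2) (\<lambda>lM. sweedler 2 n (\<lambda>l'. sweedler 2 (l'!2) (\<lambda>lN.
      bullet_symz_term r g lM lN (r (l!0) (l!1) * a) (r (l'!0) (l'!1) * b)))))"
    by (simp add: bullet_pullback_symz[OF g] sweedler_commute[of 2 n])
  also have "\<dots> = sweedler 2 m (\<lambda>l. sweedler 2 (l!2) (\<lambda>lM. sweedler 4 n (\<lambda>N.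
      bullet_symz_term r g lM [N!2, N!3, N!4] (r (l!0) (l!1) * a) (r (N!0) (N!1) * b))))"
    by (simp only: sweedler_nest_last[OF multilin_bullet_symz_term_right[OF rb g]])
  also have "\<dots> = sweedler 4 m (\<lambda>M. sweedler 4 n (bullet_EQ_term r g a b M))"
    unfolding bullet_EQ_term_def
    by (intro sweedler_nest_last multilin_sweedler_inner multilin_bullet_symz_term_left[OF rb g])
  finally show ?thesis .
qed

lemma sweedler_EQ_mult_term_eq_bullet_EQ_term:
  assumes r: "bichar sm cop cou smA r" and g: "bilin sm smA (*) g"
  shows "sweedler 4 m (\<lambda>M. sweedler 4 n (EQ_mult_term r g (a * b) M))
       = sweedler 4 m (\<lambda>M. sweedler 4 n (bullet_EQ_term r g a b M))"
proof -
  note rb = bichar_bilin[OF r]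
  \<comment> \<open>cocommutativity: permute the factors of both coproducts until the summands agree\<close>
  have "sweedler 4 m (\<lambda>M. sweedler 4 n (EQ_mult_term r g (a * b) M))
     = sweedler 4 m (\<lambda>M. sweedler 4 n (EQ_mult_term r g (a * b) (foldr swap_adj [1, 3, 2] M)))"
    by (intro sweedler_swap_adjs multilin_sweedler_inner multilin_EQ_mult_term_left[OF rb g]) simp
  also have "\<dots> = sweedler 4 m (\<lambda>M. sweedler 4 n (\<lambda>N.
      EQ_mult_term r g (a * b) (foldr swap_adj [1, 3, 2] M) (foldr swap_adj [0, 1, 2, 1, 3, 2] N)))"
    by (intro sweedler_cong sweedler_swap_adjs multilin_EQ_mult_term_right[OF rb g]) simp
  also have "\<dots> = sweedler 4 m (\<lambda>M. sweedler 4 n (bullet_EQ_term r g a b M))"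
  proof (intro sweedler_cong)
    fix M N :: "'m list" assume "length M = Suc 4" "length N = Suc 4"
    then obtain x0 x1 x2 x3 x4 y0 y1 y2 y3 y4
      where "M = [x0, x1, x2, x3, x4]" "N = [y0, y1, y2, y3, y4]"
      using length_five_conv[of M] length_five_conv[of N] by auto
    then show "EQ_mult_term r g (a * b) (foldr swap_adj [1, 3, 2] M) (foldr swap_adj [0, 1, 2, 1, 3, 2] N)
        = bullet_EQ_term r g a b M N"
      by (simp add: EQ_mult_term_def bullet_EQ_term_def bullet_symz_term_def swap_adj_def ac_simps)
  qed
  finally show ?thesis .
qed

lemma EQ_pullback_sw:
  "EQ_pullback q (\<lambda>m a. sw ys (\<lambda>n b. H m a n b)) x c = sw ys (\<lambda>n b. EQ_pullback q (\<lambda>m a. H m a n b) x c)"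
  unfolding EQ_pullback_def
  by (rule trans[OF _ sw_swap], intro arg_cong[where f = "sw _"] ext sw_swap)

lemma EQ_bullet_cou_pair_single:
  assumes r: "bichar sm cop cou smA r" and g: "bilin sm smA (*) g"
  shows "sw (EQ cop r (bullet cop cou_pair [(m, a)] [(n, b)])) g
       = sw (bullet cop (symz cop r) (EQ cop r [(m, a)]) (EQ cop r [(n, b)])) g"
proof -
  have "sw (EQ cop r (bullet cop cou_pair [(m, a)] [(n, b)])) g = sw (EQ cop r [(m * n, a * b)]) g"
    using EQ_cong[OF bichar_bilin[OF r] bullet_cou_pair_single] g unfolding ten_eq_def by blast
  also have "\<dots> = sweedler 4 m (\<lambda>M. sweedler 4 n (EQ_mult_term r g (a * b) M))"
    by (simp add: sw_EQ sw_single EQ_pullback_mult[OF r g])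
  also have "\<dots> = sweedler 4 m (\<lambda>M. sweedler 4 n (bullet_EQ_term r g a b M))"
    by (rule sweedler_EQ_mult_term_eq_bullet_EQ_term[OF r g])
  also have "\<dots> = sw (bullet cop (symz cop r) (EQ cop r [(m, a)]) (EQ cop r [(n, b)])) g"
    by (rule bullet_pullback_EQ[OF r g, symmetric])
  finally show ?thesis .
qed

text \<open>Since \<open>bullet cop cou_pair\<close> is the original product of \<open>M\<^sub>A\<close>, this says that \<open>EQ_r\<close>
  intertwines it with \<open>bullet_s\<close>, \<open>s\<close> the symmetrization of \<open>r\<close>.\<close>

lemma EQ_bullet_cou_pair:
  assumes r: "bichar sm cop cou smA r"
  shows "ten_eq sm smA (EQ cop r (bullet cop cou_pair xs ys)) (bullet cop (symz cop r) (EQ cop r xs) (EQ cop r ys))"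
  unfolding ten_eq_def
proof (intro allI impI)
  fix g :: "'m \<Rightarrow> 'a \<Rightarrow> complex" assume g: "bilin sm smA (*) g"
  let ?s = "symz cop r"
  have "bullet_pullback cou_pair (EQ_pullback r g) m a
      = (\<lambda>n b. EQ_pullback r (\<lambda>M A. EQ_pullback r (bullet_pullback ?s g M A) n b) m a)" for m a
    using EQ_bullet_cou_pair_single[OF r g, of m a] by (simp add: sw_EQ sw_bullet sw_single fun_eq_iff)
  then show "sw (EQ cop r (bullet cop cou_pair xs ys)) g = sw (bullet cop ?s (EQ cop r xs) (EQ cop r ys)) g"
    by (simp add: sw_EQ sw_bullet) (intro arg_cong[where f = "sw xs"] ext EQ_pullback_sw[symmetric])
qed

lemma EQ_transport_bullet:
  assumes r1: "bichar sm cop cou smA r1" and r2: "bichar sm cop cou smA r2"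
  shows "ten_eq sm smA
           (EQ cop r2 (EQ cop (binv S r1) (bullet cop (symz cop r1) x y)))
           (bullet cop (symz cop r2) (EQ cop r2 (EQ cop (binv S r1) x)) (EQ cop r2 (EQ cop (binv S r1) y)))"
proof -
  note rb1 = bichar_bilin[OF r1]
  define x0 where "x0 = EQ cop (binv S r1) x"
  define y0 where "y0 = EQ cop (binv S r1) y"
  define z where "z = bullet cop cou_pair x0 y0"
  \<comment> \<open>\<open>x\<close> and \<open>y\<close> are the images of \<open>x0\<close> and \<open>y0\<close> under \<open>EQ_r1\<close>, so their product is that of \<open>z\<close>\<close>
  have "ten_eq sm smA (bullet cop (symz cop r1) x y) (bullet cop (symz cop r1) (EQ cop r1 x0) (EQ cop r1 y0))"
    unfolding x0_def y0_def
    by (rule bullet_cong[OF symz_bilin[OF rb1]]; rule ten_eq_sym, rule EQ_binv_inverse(1)[OF r1])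
  also have "ten_eq sm smA (bullet cop (symz cop r1) (EQ cop r1 x0) (EQ cop r1 y0)) (EQ cop r1 z)"
    unfolding z_def by (rule ten_eq_sym[OF EQ_bullet_cou_pair[OF r1]])
  finally have "ten_eq sm smA (EQ cop (binv S r1) (bullet cop (symz cop r1) x y)) (EQ cop (binv S r1) (EQ cop r1 z))"
    by (rule EQ_cong[OF binv_bilin[OF rb1]])
  also have "ten_eq sm smA (EQ cop (binv S r1) (EQ cop r1 z)) z"
    by (rule EQ_binv_inverse(2)[OF r1])
  finally have "ten_eq sm smA (EQ cop (binv S r1) (bullet cop (symz cop r1) x y)) z" .
  then have "ten_eq sm smA (EQ cop r2 (EQ cop (binv S r1) (bullet cop (symz cop r1) x y))) (EQ cop r2 z)"
    by (rule EQ_cong[OF bichar_bilin[OF r2]])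
  also have "ten_eq sm smA (EQ cop r2 z) (bullet cop (symz cop r2) (EQ cop r2 x0) (EQ cop r2 y0))"
    unfolding z_def by (rule EQ_bullet_cou_pair[OF r2])
  finally show ?thesis
    unfolding x0_def y0_def .
qed

end

theorem corollary2p8:
  fixes sm :: "complex \<Rightarrow> 'm::comm_ring_1 \<Rightarrow> 'm"
    and cop :: "'m \<Rightarrow> ('m \<times> 'm) list"
    and cou :: "'m \<Rightarrow> complex"
    and S :: "'m \<Rightarrow> 'm"
    and smA :: "complex \<Rightarrow> 'a::comm_ring_1 \<Rightarrow> 'a"
  assumes "comm_hopf_algebra sm cop cou S"
    and "cocommutative sm cop"
    and "comm_calg smA"
  shows "(\<forall>r. bichar sm cop cou smA r \<longrightarrow>
            (\<forall>x. ten_eq sm smA (EQ cop r (EQ cop (binv S r) x)) x \<and>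
                 ten_eq sm smA (EQ cop (binv S r) (EQ cop r x)) x))
       \<and> (\<forall>r1 r2. bichar sm cop cou smA r1 \<longrightarrow> bichar sm cop cou smA r2 \<longrightarrow>
            (\<forall>x y. ten_eq sm smA
               (EQ cop r2 (EQ cop (binv S r1) (bullet cop (symz cop r1) x y)))
               (bullet cop (symz cop r2) (EQ cop r2 (EQ cop (binv S r1) x))
                                         (EQ cop r2 (EQ cop (binv S r1) y)))))"
proof -
  interpret cocomm_hopf_coeffs sm cop cou S smA
    using assms by (simp add: cocomm_hopf_coeffs_def cocomm_hopf_algebra_def cocomm_hopf_algebra_axioms_def)
  show ?thesis
    using EQ_binv_inverse EQ_transport_bullet by blast
qed

end
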